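(* Let $p$ be a prime and let $a,b\in\mathbb{C}_p$ with $a\neq0$, $b\neq0$, $a\neq b$ and $|a|_p<|b|_p$. Let $P=-\frac1b$, $D=\mathbb{C}_p\setminus\{P\}$, $f(x)=\frac{ax^2}{bx+1}$ on $D$, and $x_1=0$ (a fixed point of $f$). For $n\geq 0$ put $r_n=\frac{|b|_p^{n-1}}{|a|_p^{n}}$, and put $l_0=0$ and $l_{n+1}=\frac{|a|_p^{n}}{|b|_p^{n+1}}$ for $n\ge 0$. Then $$D\setminus\Big(\bigcup_{i=1}^{\infty}S_{r_i}(x_1)\cup\bigcup_{j=0}^{\infty}S_{l_j}(P)\Big)\subseteq A(x_1).$$
   Context: $\mathbb{C}_p$ is the field of complex $p$-adic numbers with $p$-adic norm $|\cdot|_p$. For $c\in\mathbb{C}_p$ and $r\ge 0$, $S_r(c)=\{x\in\mathbb{C}_p:|x-c|_p=r\}$. For $y\in D$ write $y^{(n)}=f^n(y)$ (the $n$-th iterate, where defined, i.e. as long as no earlier iterate equals $P$). For a fixed point $x^{(0)}$ of $f$, its basin of attraction is $A(x^{(0)})=\{y: y^{(n)}\text{ is defined for all }n\text{ and }y^{(n)}\to x^{(0)}\text{ as }n\to\infty\}$. *)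

theory Defs
  imports "HOL-Analysis.Analysis" "HOL-Computational_Algebra.Primes"
begin

text \<open>Axiomatic characterisation of the field of complex p-adic numbers C_p:
  a field K with a non-archimedean absolute value nrm which restricts to the
  p-adic absolute value on the integers (hence K has characteristic 0 and
  contains Q with its p-adic absolute value), which is complete, algebraically
  closed, and in which the algebraic numbers (over Q) are dense.
  These properties determine (K, nrm) up to isometric isomorphism as C_p.\<close>

definition nonarch_abs :: "('a::field \<Rightarrow> real) \<Rightarrow> bool" where
  "nonarch_abs nrm \<longleftrightarrow>
     (\<forall>x. 0 \<le> nrm x) \<and> (\<forall>x. nrm x = 0 \<longleftrightarrow> x = 0) \<and>
     (\<forall>x y. nrm (x * y) = nrm x * nrm y) \<and>
     (\<forall>x y. nrm (x + y) \<le> max (nrm x) (nrm y))"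

definition algebraic_over_Q :: "'a::field \<Rightarrow> bool" where
  "algebraic_over_Q y \<longleftrightarrow>
     (\<exists>(c::nat \<Rightarrow> int) n. (\<exists>i\<le>n. c i \<noteq> 0) \<and> (\<Sum>i\<le>n. of_int (c i) * y ^ i) = 0)"

definition is_Cp :: "nat \<Rightarrow> ('a::field \<Rightarrow> real) \<Rightarrow> bool" where
  "is_Cp p nrm \<longleftrightarrow>
     nonarch_abs nrm \<and>
     (\<forall>k::int. k \<noteq> 0 \<longrightarrow> nrm (of_int k) = inverse (real p ^ multiplicity (int p) k)) \<and>
     (\<forall>X::nat \<Rightarrow> 'a. (\<forall>e>0. \<exists>N. \<forall>m\<ge>N. \<forall>n\<ge>N. nrm (X m - X n) < e)
          \<longrightarrow> (\<exists>L. (\<lambda>n. nrm (X n - L)) \<longlonglongrightarrow> 0)) \<and>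
     (\<forall>(c::nat \<Rightarrow> 'a) n. n \<ge> 1 \<and> c n \<noteq> 0 \<longrightarrow> (\<exists>x. (\<Sum>i\<le>n. c i * x ^ i) = 0)) \<and>
     (\<forall>x. \<forall>e>0. \<exists>y. algebraic_over_Q y \<and> nrm (x - y) < e)"

definition psphere :: "('a::field \<Rightarrow> real) \<Rightarrow> real \<Rightarrow> 'a \<Rightarrow> 'a set" where
  "psphere nrm r c = {x. nrm (x - c) = r}"

text \<open>Basin of attraction of the fixed point x0 of f, where f is defined off the
  pole P: the iterates y^(n) = f^n(y) are defined for all n iff no iterate equals P,
  and y^(n) \<rightarrow> x0 in the topology of nrm.\<close>
definition basin :: "('a::field \<Rightarrow> real) \<Rightarrow> ('a \<Rightarrow> 'a) \<Rightarrow> 'a \<Rightarrow> 'a \<Rightarrow> 'a set" where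
  "basin nrm f P x0 =
     {y. (\<forall>n. (f ^^ n) y \<noteq> P) \<and> (\<lambda>n. nrm ((f ^^ n) y - x0)) \<longlonglongrightarrow> 0}"

end

theory Submission
  imports Defs
begin

text \<open>Write \<alpha> = |a|, \<beta> = |b| and q = \<alpha>/\<beta> < 1, so that |P| = 1/\<beta>. On the disc |x| < 1/\<beta>
  the ultrametric inequality gives |x - P| = 1/\<beta>, hence |f x| = \<alpha>|x|^2 \<le> q|x| and orbits contract
  to 0. Outside the closed disc |x - P| = |x|, hence |f x| = q|x|; as q r_(n+1) = r_n and r_0 = 1/\<beta>,
  f maps the shell r_n < |x| < r_(n+1) into the previous shell, so an orbit missing the spheres
  S_(r_i)(0) enters the disc after finitely many steps. On the sphere |x| = 1/\<beta> one has
  |f x| = \<alpha>/(\<beta>^3 |x - P|), and |f x| = r_i exactly when |x - P| = l_(i+2); so off the spheres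
  S_(l_j)(P) the first iterate falls into one of the two previous cases.\<close>

lemma basin_if_image_in_basin:
  assumes "x \<noteq> P" and "f x \<in> basin nrm f P x0"
  shows "x \<in> basin nrm f P x0"
proof -
  have "(f ^^ n) x \<noteq> P" for n
    using assms by (cases n) (auto simp: basin_def funpow_Suc_right simp del: funpow.simps)
  moreover have "(\<lambda>n. nrm ((f ^^ Suc n) x - x0)) \<longlonglongrightarrow> 0"
    using assms(2) by (simp add: basin_def funpow_Suc_right del: funpow.simps)
  then have "(\<lambda>n. nrm ((f ^^ n) x - x0)) \<longlonglongrightarrow> 0"
    by (rule LIMSEQ_imp_Suc)
  ultimately show ?thesis
    by (simp add: basin_def)
qed

locale nonarch_abs_field =
  fixes nrm :: "'a::field \<Rightarrow> real"
  assumes nonarch_abs: "nonarch_abs nrm"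
begin

lemma nrm_nonneg: "0 \<le> nrm x"
  using nonarch_abs by (simp add: nonarch_abs_def)

lemma nrm_eq_0_iff [simp]: "nrm x = 0 \<longleftrightarrow> x = 0"
  using nonarch_abs by (simp add: nonarch_abs_def)

lemma nrm_0 [simp]: "nrm 0 = 0"
  by simp

lemma nrm_pos_iff: "0 < nrm x \<longleftrightarrow> x \<noteq> 0"
  using nrm_nonneg[of x] by (auto simp: less_le)

lemma nrm_mult: "nrm (x * y) = nrm x * nrm y"
  using nonarch_abs by (simp add: nonarch_abs_def)

lemma nrm_add_le_max: "nrm (x + y) \<le> max (nrm x) (nrm y)"
  using nonarch_abs by (simp add: nonarch_abs_def)

lemma nrm_1 [simp]: "nrm 1 = 1"
  using nrm_mult[of 1 1] by simp

lemma nrm_minus [simp]: "nrm (- x) = nrm x"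
proof -
  have "nrm (- 1) * nrm (- 1) = 1"
    using nrm_mult[of "- 1" "- 1"] by simp
  then have "nrm (- 1) = 1"
    using nrm_nonneg[of "- 1"] by (metis abs_of_nonneg abs_square_eq_1 power2_eq_square)
  then show ?thesis
    using nrm_mult[of "- 1" x] by simp
qed

lemma nrm_divide: "nrm (x / y) = nrm x / nrm y"
proof (cases "y = 0")
  case False
  then show ?thesis
    using nrm_mult[of "x / y" y] by (simp add: field_simps)
qed simp

lemma nrm_power: "nrm (x ^ n) = nrm x ^ n"
  by (induction n) (simp_all add: nrm_mult)

lemma nrm_add_eq_right:
  assumes "nrm x < nrm y"
  shows "nrm (x + y) = nrm y"
proof -
  have "nrm y \<le> max (nrm (x + y)) (nrm (- x))"
    using nrm_add_le_max[of "x + y" "- x"] by simp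
  with assms nrm_add_le_max[of x y] show ?thesis
    by auto
qed

lemma nrm_diff_eq_max:
  assumes "nrm x \<noteq> nrm y"
  shows "nrm (x - y) = max (nrm x) (nrm y)"
proof (cases "nrm x < nrm y")
  case True
  then show ?thesis
    using nrm_add_eq_right[of x "- y"] by simp
next
  case False
  with assms have "nrm (- y) < nrm x"
    by simp
  then show ?thesis
    using nrm_add_eq_right[of "- y" x] False by (simp add: add.commute)
qed

lemma basin_if_contracting:
  assumes invariant: "\<And>y. y \<in> U \<Longrightarrow> f y \<in> U \<and> y \<noteq> P"
    and contracting: "\<And>y. y \<in> U \<Longrightarrow> nrm (f y - x0) \<le> q * nrm (y - x0)"
    and "0 \<le> q" "q < 1" and "x \<in> U"
  shows "x \<in> basin nrm f P x0"
proof -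
  have orbit: "(f ^^ n) x \<in> U \<and> nrm ((f ^^ n) x - x0) \<le> q ^ n * nrm (x - x0)" for n
  proof (induction n)
    case (Suc n)
    then have "nrm ((f ^^ Suc n) x - x0) \<le> q * (q ^ n * nrm (x - x0))"
      using contracting[of "(f ^^ n) x"] mult_left_mono[OF _ \<open>0 \<le> q\<close>] by fastforce
    with Suc invariant show ?case
      by simp
  qed (simp add: \<open>x \<in> U\<close>)
  have "(\<lambda>n. q ^ n * nrm (x - x0)) \<longlonglongrightarrow> 0"
    using assms by (intro tendsto_mult_left_zero LIMSEQ_power_zero) simp
  then have "(\<lambda>n. nrm ((f ^^ n) x - x0)) \<longlonglongrightarrow> 0"
    by (rule tendsto_sandwich[of "\<lambda>_. 0", rotated 3]) (use orbit nrm_nonneg in auto)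
  with orbit invariant show ?thesis
    by (simp add: basin_def)
qed

end

locale quadratic_pole_map = nonarch_abs_field nrm for nrm :: "'a::field \<Rightarrow> real" +
  fixes a b :: 'a
  assumes a_nonzero: "a \<noteq> 0"
    and nrm_a_less_nrm_b: "nrm a < nrm b"
begin

abbreviation \<alpha> :: real where "\<alpha> \<equiv> nrm a"
abbreviation \<beta> :: real where "\<beta> \<equiv> nrm b"
abbreviation q :: real where "q \<equiv> \<alpha> / \<beta>"
abbreviation pole :: 'a where "pole \<equiv> - 1 / b"
abbreviation qmap :: "'a \<Rightarrow> 'a" where "qmap \<equiv> \<lambda>x. a * x ^ 2 / (b * x + 1)"
abbreviation escape_radius :: "nat \<Rightarrow> real" where "escape_radius n \<equiv> \<beta> ^ n / \<beta> / \<alpha> ^ n"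

lemma alpha_pos: "0 < \<alpha>"
  using a_nonzero by (simp add: nrm_pos_iff)

lemma beta_pos: "0 < \<beta>"
  using alpha_pos nrm_a_less_nrm_b by linarith

lemma q_bounds: "0 < q" "q < 1"
  using alpha_pos beta_pos nrm_a_less_nrm_b by auto

lemma b_nonzero [simp]: "b \<noteq> 0"
  using beta_pos by auto

declare a_nonzero [simp]

lemma nrm_inverse_b [simp]: "nrm (1 / b) = 1 / \<beta>"
  by (simp add: nrm_divide)

lemma nrm_pole: "nrm pole = 1 / \<beta>"
  by simp

lemma nrm_qmap:
  assumes "x \<noteq> pole"
  shows "nrm (qmap x) = \<alpha> * nrm x ^ 2 / (\<beta> * nrm (x - pole))"
proof -
  have "b * x + 1 = b * (x - pole)"
    using b_nonzero by (simp add: field_simps)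
  then show ?thesis
    by (simp add: nrm_divide nrm_mult nrm_power)
qed

lemma nrm_qmap_inside:
  assumes "nrm x < 1 / \<beta>"
  shows "nrm (qmap x) = \<alpha> * nrm x ^ 2"
proof -
  have "x \<noteq> pole"
    using assms nrm_pole by auto
  moreover have "nrm (x - pole) = 1 / \<beta>"
    using nrm_diff_eq_max[of x pole] assms by (simp add: nrm_pole)
  ultimately show ?thesis
    using nrm_qmap beta_pos by simp
qed

lemma nrm_qmap_outside:
  assumes "1 / \<beta> < nrm x"
  shows "nrm (qmap x) = q * nrm x"
proof -
  have "x \<noteq> pole"
    using assms nrm_pole by auto
  moreover have "nrm (x - pole) = nrm x"
    using nrm_diff_eq_max[of x pole] assms by (simp add: nrm_pole)
  ultimately show ?thesis
    using nrm_qmap by (simp add: power2_eq_square)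
qed

lemma nrm_qmap_on_pole_sphere:
  assumes "nrm x = 1 / \<beta>" and "x \<noteq> pole"
  shows "nrm (qmap x) = \<alpha> / (\<beta> ^ 3 * nrm (x - pole))"
  using nrm_qmap[OF assms(2)] assms(1) by (simp add: power2_eq_square power3_eq_cube)

lemma disc_subset_basin:
  assumes "nrm x < 1 / \<beta>"
  shows "x \<in> basin nrm qmap pole 0"
proof (rule basin_if_contracting[where U = "{y. nrm y < 1 / \<beta>}" and q = q])
  fix y assume y: "y \<in> {y. nrm y < 1 / \<beta>}"
  have "nrm (qmap y) = \<alpha> * nrm y * nrm y"
    using y nrm_qmap_inside[of y] by (simp add: power2_eq_square)
  also have "\<dots> \<le> \<alpha> * (1 / \<beta>) * nrm y"
    using y alpha_pos nrm_nonneg[of y] by (intro mult_right_mono mult_left_mono) auto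
  finally have contracting: "nrm (qmap y) \<le> q * nrm y"
    by simp
  then show "nrm (qmap y - 0) \<le> q * nrm (y - 0)"
    by simp
  have "q * nrm y \<le> nrm y"
    using q_bounds nrm_nonneg[of y] by (intro mult_left_le_one_le) auto
  with contracting y show "qmap y \<in> {y. nrm y < 1 / \<beta>} \<and> y \<noteq> pole"
    using nrm_pole by auto
qed (use assms q_bounds in auto)

lemma q_mult_escape_radius_Suc: "q * escape_radius (Suc n) = escape_radius n"
  using alpha_pos beta_pos by (simp add: field_simps)

lemma escape_radius_unbounded: "\<exists>n. t < escape_radius n"
proof -
  have "1 < \<beta> / \<alpha>"
    using alpha_pos nrm_a_less_nrm_b by simp
  then obtain n where "t * \<beta> < (\<beta> / \<alpha>) ^ n"
    using real_arch_pow by blast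
  then have "t < (\<beta> / \<alpha>) ^ n / \<beta>"
    using beta_pos by (simp add: pos_less_divide_eq)
  then show ?thesis
    by (auto simp: power_divide mult.commute)
qed

lemma nrm_qmap_escape_radius_iff:
  assumes "1 / \<beta> < nrm x"
  shows "nrm (qmap x) < escape_radius i \<longleftrightarrow> nrm x < escape_radius (Suc i)"
    and "escape_radius i < nrm (qmap x) \<longleftrightarrow> escape_radius (Suc i) < nrm x"
    and "nrm (qmap x) = escape_radius i \<longleftrightarrow> nrm x = escape_radius (Suc i)"
  unfolding nrm_qmap_outside[OF assms] q_mult_escape_radius_Suc[of i, symmetric]
  using q_bounds(1) by (simp_all only: mult_less_cancel_left_pos mult_cancel_left less_irrefl) simp

lemma annulus_subset_basin:
  assumes "1 / \<beta> < nrm x" and "nrm x < escape_radius n"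
    and "\<And>i. i \<ge> 1 \<Longrightarrow> nrm x \<noteq> escape_radius i"
  shows "x \<in> basin nrm qmap pole 0"
  using assms
proof (induction n arbitrary: x)
  case 0
  then show ?case
    by simp
next
  case (Suc n)
  note shift = nrm_qmap_escape_radius_iff[OF Suc.prems(1)]
  have "x \<noteq> pole"
    using Suc.prems(1) nrm_pole by auto
  moreover have "qmap x \<in> basin nrm qmap pole 0"
  proof (cases "nrm x < escape_radius 1")
    case True
    then have "nrm (qmap x) < 1 / \<beta>"
      using shift(1)[of 0] by simp
    then show ?thesis
      by (rule disc_subset_basin)
  next
    case False
    with Suc.prems(3)[of 1] have "escape_radius 1 < nrm x"
      by simp
    then have "1 / \<beta> < nrm (qmap x)"
      using shift(2)[of 0] by simp
    moreover have "nrm (qmap x) < escape_radius n"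
      using shift(1) Suc.prems(2) by blast
    moreover have "nrm (qmap x) \<noteq> escape_radius i" if "i \<ge> 1" for i
      using shift(3) Suc.prems(3)[of "Suc i"] that by simp
    ultimately show ?thesis
      by (rule Suc.IH)
  qed
  ultimately show ?case
    by (rule basin_if_image_in_basin)
qed

lemma outside_subset_basin:
  assumes "1 / \<beta> < nrm x" and "\<And>i. i \<ge> 1 \<Longrightarrow> nrm x \<noteq> escape_radius i"
  shows "x \<in> basin nrm qmap pole 0"
  using escape_radius_unbounded[of "nrm x"] annulus_subset_basin assms by blast

lemma pole_sphere_subset_basin:
  assumes "nrm x = 1 / \<beta>" and "x \<noteq> pole"
    and "\<And>j. j \<ge> 1 \<Longrightarrow> nrm (x - pole) \<noteq> \<alpha> ^ j / \<beta> ^ (j + 1)"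
  shows "x \<in> basin nrm qmap pole 0"
proof -
  define s where "s = nrm (x - pole)"
  have s_pos: "0 < s"
    using assms(2) unfolding s_def by (metis nrm_pos_iff right_minus_eq)
  have image: "nrm (qmap x) = \<alpha> / (\<beta> ^ 3 * s)"
    using nrm_qmap_on_pole_sphere[OF assms(1,2)] by (simp add: s_def)
  have "qmap x \<in> basin nrm qmap pole 0"
  proof (cases "\<alpha> / \<beta> ^ 2 < s")
    case True
    then have "\<alpha> / (\<beta> ^ 3 * s) < 1 / \<beta>"
      using beta_pos s_pos by (simp add: field_simps power3_eq_cube power2_eq_square)
    then show ?thesis
      unfolding image[symmetric]
      by (rule disc_subset_basin)
  next
    case False
    with assms(3)[of 1] have "s < \<alpha> / \<beta> ^ 2"
      by (simp add: s_def power2_eq_square)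
    then have "1 / \<beta> < \<alpha> / (\<beta> ^ 3 * s)"
      using beta_pos s_pos by (simp add: field_simps power3_eq_cube power2_eq_square)
    moreover have "\<alpha> / (\<beta> ^ 3 * s) \<noteq> escape_radius i" for i
    proof
      assume "\<alpha> / (\<beta> ^ 3 * s) = escape_radius i"
      then have "s = \<alpha> ^ (i + 1) / \<beta> ^ (i + 2)"
        using alpha_pos beta_pos s_pos by (simp add: field_simps power3_eq_cube)
      with assms(3)[of "i + 1"] show False
        by (simp add: s_def)
    qed
    ultimately show ?thesis
      unfolding image[symmetric] by (rule outside_subset_basin)
  qed
  with assms(2) show ?thesis
    by (rule basin_if_image_in_basin)
qed

end

text \<open>Of the axioms of \<open>\<complex>\<^sub>p\<close> only the ultrametric absolute value is used.\<close>

theorem theorem3p3: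
  fixes p :: nat and nrm :: "'a::field \<Rightarrow> real" and a b :: 'a
  assumes "prime p" and "is_Cp p nrm"
    and "a \<noteq> 0" and "b \<noteq> 0" and "a \<noteq> b" and "nrm a < nrm b"
  defines "P \<equiv> - 1 / b"
    and "f \<equiv> (\<lambda>x. a * x ^ 2 / (b * x + 1))"
    and "r \<equiv> (\<lambda>n::nat. nrm b ^ n / nrm b / nrm a ^ n)"
    and "l \<equiv> (\<lambda>n::nat. if n = 0 then 0 else nrm a ^ (n - 1) / nrm b ^ n)"
  shows "(UNIV - {P}) - ((\<Union>i\<in>{1..}. psphere nrm (r i) 0) \<union> (\<Union>j. psphere nrm (l j) P))
           \<subseteq> basin nrm f P 0"
proof
  interpret quadratic_pole_map nrm a b
    using assms(2,3,6) by unfold_locales (simp_all add: is_Cp_def)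
  fix x
  assume "x \<in> (UNIV - {P}) - ((\<Union>i\<in>{1..}. psphere nrm (r i) 0) \<union> (\<Union>j. psphere nrm (l j) P))"
  then have "x \<noteq> pole" and off_escape: "\<And>i. i \<ge> 1 \<Longrightarrow> nrm x \<noteq> escape_radius i"
    and off_l: "\<And>j. nrm (x - pole) \<noteq> l j"
    by (auto simp: P_def r_def psphere_def)
  have off_pole_spheres: "nrm (x - pole) \<noteq> \<alpha> ^ j / \<beta> ^ (j + 1)" for j
    using off_l[of "Suc j"] by (simp add: l_def)
  have "x \<in> basin nrm qmap pole 0"
    using disc_subset_basin outside_subset_basin[OF _ off_escape]
      pole_sphere_subset_basin[OF _ \<open>x \<noteq> pole\<close> off_pole_spheres]
    by (cases "nrm x" "1 / \<beta>" rule: linorder_cases) auto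
  then show "x \<in> basin nrm f P 0"
    by (simp add: P_def f_def)
qed

end
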